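(* Let $G$ be a finitely generated group and let $F=(F_n)_{n=1}^\infty$ be a sequence of finite subsets of $G$ that is both left- and right-Følner. Then \[\frac{|\{C\in\mathcal{C}(G):C\cap F_n\ne\varnothing\text{ and }C\not\subset F_n\}|}{|F_n|}\to0\] as $n\to\infty$. In particular, $\textup{cr}_F(G)=\limsup_{n\to\infty}\frac{|\{C\in\mathcal{C}(G):C\subset F_n\}|}{|F_n|}$.
   Context: $\mathcal{C}(G)$ is the set of conjugacy classes of $G$. $F$ is left-Følner if $|xF_n\triangle F_n|/|F_n|\to0$ for every $x\in G$, right-Følner if $|F_nx\triangle F_n|/|F_n|\to0$ for every $x\in G$. $\textup{cr}_F(G)=\limsup_{n\to\infty}\frac{|\{C\in\mathcal{C}(G):C\cap F_n\ne\varnothing\}|}{|F_n|}$. *)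

theory Defs
  imports "HOL-Algebra.Algebra" "HOL-Library.Liminf_Limsup" "HOL-Library.Extended_Real"
begin

definition conj_class :: "('a, 'b) monoid_scheme \<Rightarrow> 'a \<Rightarrow> 'a set" where
  "conj_class G x = {inv\<^bsub>G\<^esub> g \<otimes>\<^bsub>G\<^esub> x \<otimes>\<^bsub>G\<^esub> g | g. g \<in> carrier G}"

definition conj_classes :: "('a, 'b) monoid_scheme \<Rightarrow> 'a set set" where
  "conj_classes G = conj_class G ` carrier G"

definition fin_gen_group :: "('a, 'b) monoid_scheme \<Rightarrow> bool" where
  "fin_gen_group G \<longleftrightarrow> group G \<and> (\<exists>S. finite S \<and> S \<subseteq> carrier G \<and> generate G S = carrier G)"

definition sym_diff :: "'a set \<Rightarrow> 'a set \<Rightarrow> 'a set" where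
  "sym_diff A B = (A - B) \<union> (B - A)"

definition left_folner :: "('a, 'b) monoid_scheme \<Rightarrow> (nat \<Rightarrow> 'a set) \<Rightarrow> bool" where
  "left_folner G F \<longleftrightarrow> (\<forall>n. finite (F n) \<and> F n \<noteq> {} \<and> F n \<subseteq> carrier G) \<and>
     (\<forall>x\<in>carrier G. (\<lambda>n. real (card (sym_diff (x <#\<^bsub>G\<^esub> F n) (F n))) / real (card (F n)))
        \<longlonglongrightarrow> 0)"

definition right_folner :: "('a, 'b) monoid_scheme \<Rightarrow> (nat \<Rightarrow> 'a set) \<Rightarrow> bool" where
  "right_folner G F \<longleftrightarrow> (\<forall>n. finite (F n) \<and> F n \<noteq> {} \<and> F n \<subseteq> carrier G) \<and>
     (\<forall>x\<in>carrier G. (\<lambda>n. real (card (sym_diff (F n #>\<^bsub>G\<^esub> x) (F n))) / real (card (F n)))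
        \<longlonglongrightarrow> 0)"

definition cr :: "('a, 'b) monoid_scheme \<Rightarrow> (nat \<Rightarrow> 'a set) \<Rightarrow> ereal" where
  "cr G F = limsup (\<lambda>n. ereal (real (card {C \<in> conj_classes G. C \<inter> F n \<noteq> {}}) / real (card (F n))))"

end

theory Submission
  imports Defs "HOL-Analysis.Extended_Real_Limits"
begin

text \<open>Fix a finite generating set \<open>S\<close> and put \<open>T = S \<union> S\<inverse>\<close>. A conjugacy class \<open>C\<close> that meets
  a finite set \<open>A\<close> without being contained in it must contain some \<open>z \<in> A\<close> with
  \<open>t\<inverse> z t \<notin> A\<close> for some \<open>t \<in> T\<close>: otherwise \<open>C \<inter> A\<close> would be closed under conjugation by the
  generators, hence by all of \<open>G\<close>. For fixed \<open>t\<close> each such \<open>z\<close> either leaves \<open>A\<close> under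
  \<open>z \<mapsto> t\<inverse> z\<close> or, after that, under \<open>y \<mapsto> y t\<close>; so there are at most
  \<open>|tA \<triangle> A| + |At \<triangle> A|\<close>. Dividing by \<open>|F\<^sub>n|\<close>, the two-sided Folner condition makes the number
  of such "boundary" classes negligible, and the remaining classes meeting \<open>F\<^sub>n\<close> are exactly
  those contained in it.\<close>

context group
begin

lemma conj_class_self: "x \<in> carrier G \<Longrightarrow> x \<in> conj_class G x"
  unfolding conj_class_def by (rule CollectI, rule exI[of _ \<one>]) auto

lemma conj_class_subset_carrier: "x \<in> carrier G \<Longrightarrow> conj_class G x \<subseteq> carrier G"
  unfolding conj_class_def by auto

lemma conj_class_conj_closed:
  assumes x: "x \<in> carrier G" and z: "z \<in> conj_class G x" and g: "g \<in> carrier G"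
  shows "inv g \<otimes> z \<otimes> g \<in> conj_class G x"
proof -
  obtain h where h: "h \<in> carrier G" "z = inv h \<otimes> x \<otimes> h"
    using z unfolding conj_class_def by auto
  have "inv g \<otimes> z \<otimes> g = inv (h \<otimes> g) \<otimes> x \<otimes> (h \<otimes> g)"
    using h g x by (simp add: inv_mult_group m_assoc)
  then show ?thesis using h g unfolding conj_class_def by blast
qed

lemma conj_class_eq:
  assumes x: "x \<in> carrier G" and z: "z \<in> conj_class G x"
  shows "conj_class G z = conj_class G x"
proof -
  obtain h where h: "h \<in> carrier G" "z = inv h \<otimes> x \<otimes> h"
    using z unfolding conj_class_def by auto
  have zG: "z \<in> carrier G" using h x by simp
  have "x = inv (inv h) \<otimes> z \<otimes> inv h"
    using h x by (simp add: m_assoc flip: m_assoc[of h "inv h"])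
  then have xz: "x \<in> conj_class G z" using h unfolding conj_class_def by blast
  show ?thesis
    using conj_class_conj_closed[OF x z] conj_class_conj_closed[OF zG xz]
    unfolding conj_class_def[of G z] conj_class_def[of G x] by blast
qed

lemma conj_classes_eq_conj_class:
  "C \<in> conj_classes G \<Longrightarrow> z \<in> C \<Longrightarrow> C = conj_class G z"
  unfolding conj_classes_def using conj_class_eq by blast

lemma conj_class_subset_if_generators_preserve:
  assumes S: "S \<subseteq> carrier G" "generate G S = carrier G"
    and C: "C \<in> conj_classes G" and z: "z \<in> C" "z \<in> A"
    and preserve: "\<And>t w. t \<in> S \<union> (\<lambda>s. inv s) ` S \<Longrightarrow> w \<in> C \<Longrightarrow> w \<in> A \<Longrightarrow> inv t \<otimes> w \<otimes> t \<in> A"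
  shows "C \<subseteq> A"
proof -
  obtain x where x: "x \<in> carrier G" "C = conj_class G x"
    using C unfolding conj_classes_def by auto
  have CG: "C \<subseteq> carrier G" using x conj_class_subset_carrier by simp
  have preserved: "\<forall>w\<in>C \<inter> A. inv g \<otimes> w \<otimes> g \<in> A" if "g \<in> generate G S" for g
    using that
  proof (induction rule: generate.induct)
    case one
    then show ?case using CG by auto
  next
    case (incl h)
    then show ?case using preserve by blast
  next
    case (inv h)
    then show ?case using preserve by blast
  next
    case (eng h1 h2)
    have "inv (h1 \<otimes> h2) \<otimes> w \<otimes> (h1 \<otimes> h2) \<in> A" if w: "w \<in> C" "w \<in> A" for w
    proof -
      have "h1 \<in> carrier G" "h2 \<in> carrier G" "w \<in> carrier G"
        using eng.hyps S w CG by (auto intro: generate_in_carrier)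
      then have "inv (h1 \<otimes> h2) \<otimes> w \<otimes> (h1 \<otimes> h2) = inv h2 \<otimes> (inv h1 \<otimes> w \<otimes> h1) \<otimes> h2"
        by (simp add: inv_mult_group m_assoc)
      moreover have "inv h1 \<otimes> w \<otimes> h1 \<in> C"
        using conj_class_conj_closed x w \<open>h1 \<in> carrier G\<close> by blast
      ultimately show ?thesis using eng.IH w by auto
    qed
    then show ?case by blast
  qed
  show ?thesis
  proof
    fix y assume "y \<in> C"
    then obtain g where "g \<in> carrier G" "y = inv g \<otimes> z \<otimes> g"
      using conj_classes_eq_conj_class[OF C z(1)] unfolding conj_class_def by auto
    then show "y \<in> A" using preserved[of g] S z by auto
  qed
qed

lemma card_conj_escape_le:
  assumes A: "finite A" "A \<subseteq> carrier G" and t: "t \<in> carrier G"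
  shows "card {z\<in>A. inv t \<otimes> z \<otimes> t \<notin> A}
    \<le> card (sym_diff (t <# A) A) + card (sym_diff (A #> t) A)"
proof -
  define A1 where "A1 = {z\<in>A. inv t \<otimes> z \<otimes> t \<notin> A \<and> inv t \<otimes> z \<notin> A}"
  define A2 where "A2 = {z\<in>A. inv t \<otimes> z \<otimes> t \<notin> A \<and> inv t \<otimes> z \<in> A}"
  have lcoset: "t <# A = (\<lambda>a. t \<otimes> a) ` A" and rcoset: "A #> t = (\<lambda>a. a \<otimes> t) ` A"
    unfolding l_coset_def r_coset_def by auto
  have "A1 \<subseteq> sym_diff (t <# A) A"
  proof
    fix z assume z: "z \<in> A1"
    have "z \<notin> (\<lambda>a. t \<otimes> a) ` A"
    proof
      assume "z \<in> (\<lambda>a. t \<otimes> a) ` A"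
      then obtain a where "a \<in> A" "z = t \<otimes> a" by auto
      moreover have "inv t \<otimes> (t \<otimes> a) = a" if "a \<in> A" for a
        using that A t by (subst m_assoc[symmetric]) auto
      ultimately show False using z unfolding A1_def by auto
    qed
    then show "z \<in> sym_diff (t <# A) A" using z unfolding A1_def sym_diff_def lcoset by auto
  qed
  then have card_A1: "card A1 \<le> card (sym_diff (t <# A) A)"
    using A(1) by (intro card_mono) (auto simp: sym_diff_def lcoset)
  let ?conj = "\<lambda>z. inv t \<otimes> z \<otimes> t"
  have "inj_on ?conj (carrier G)"
    using t by (intro inj_onI) (metis inv_closed l_cancel m_closed r_cancel)
  then have "inj_on ?conj A2"
    by (rule inj_on_subset) (use A in \<open>auto simp: A2_def\<close>)
  moreover have "?conj ` A2 \<subseteq> sym_diff (A #> t) A"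
    unfolding A2_def sym_diff_def rcoset by auto
  ultimately have card_A2: "card A2 \<le> card (sym_diff (A #> t) A)"
    using A(1) by (metis card_image card_mono finite_Diff finite_Un finite_imageI rcoset sym_diff_def)
  have "{z\<in>A. inv t \<otimes> z \<otimes> t \<notin> A} = A1 \<union> A2" unfolding A1_def A2_def by auto
  then have "card {z\<in>A. inv t \<otimes> z \<otimes> t \<notin> A} \<le> card A1 + card A2" by (simp add: card_Un_le)
  then show ?thesis using card_A1 card_A2 by linarith
qed

lemma card_boundary_conj_classes_le:
  assumes S: "finite S" "S \<subseteq> carrier G" "generate G S = carrier G"
    and A: "finite A" "A \<subseteq> carrier G"
  shows "card {C \<in> conj_classes G. C \<inter> A \<noteq> {} \<and> \<not> C \<subseteq> A}
    \<le> (\<Sum>t\<in>S \<union> (\<lambda>s. inv s) ` S. card (sym_diff (t <# A) A) + card (sym_diff (A #> t) A))"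
proof -
  define T where "T = S \<union> (\<lambda>s. inv s) ` S"
  have T: "finite T" "T \<subseteq> carrier G" using S unfolding T_def by auto
  define escape where "escape t = {z\<in>A. inv t \<otimes> z \<otimes> t \<notin> A}" for t
  have finite_escape: "finite (\<Union>t\<in>T. escape t)" using T A unfolding escape_def by auto
  have "{C \<in> conj_classes G. C \<inter> A \<noteq> {} \<and> \<not> C \<subseteq> A} \<subseteq> conj_class G ` (\<Union>t\<in>T. escape t)"
  proof
    fix C assume C: "C \<in> {C \<in> conj_classes G. C \<inter> A \<noteq> {} \<and> \<not> C \<subseteq> A}"
    then have CG: "C \<in> conj_classes G" and "\<not> C \<subseteq> A" by auto
    obtain z where z: "z \<in> C" "z \<in> A" using C by auto
    have "\<exists>t\<in>T. \<exists>w\<in>C. w \<in> A \<and> inv t \<otimes> w \<otimes> t \<notin> A"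
    proof (rule ccontr)
      assume "\<not> ?thesis"
      then have "C \<subseteq> A"
        by (intro conj_class_subset_if_generators_preserve[OF S(2,3) CG z]) (auto simp: T_def)
      with \<open>\<not> C \<subseteq> A\<close> show False ..
    qed
    then obtain t w where "t \<in> T" "w \<in> C" "w \<in> escape t" unfolding escape_def by blast
    moreover have "C = conj_class G w" using conj_classes_eq_conj_class[OF CG \<open>w \<in> C\<close>] .
    ultimately show "C \<in> conj_class G ` (\<Union>t\<in>T. escape t)" by blast
  qed
  then have "card {C \<in> conj_classes G. C \<inter> A \<noteq> {} \<and> \<not> C \<subseteq> A}
      \<le> card (conj_class G ` (\<Union>t\<in>T. escape t))"
    using finite_escape by (intro card_mono) auto
  also have "\<dots> \<le> card (\<Union>t\<in>T. escape t)"
    using finite_escape by (rule card_image_le)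
  also have "\<dots> \<le> (\<Sum>t\<in>T. card (escape t))"
    using T(1) by (rule card_UN_le)
  also have "\<dots> \<le> (\<Sum>t\<in>T. card (sym_diff (t <# A) A) + card (sym_diff (A #> t) A))"
    using T A unfolding escape_def by (intro sum_mono card_conj_escape_le) auto
  finally show ?thesis unfolding T_def .
qed

lemma card_conj_classes_meeting:
  assumes A: "finite A"
  shows "card {C \<in> conj_classes G. C \<inter> A \<noteq> {}}
    = card {C \<in> conj_classes G. C \<subseteq> A} + card {C \<in> conj_classes G. C \<inter> A \<noteq> {} \<and> \<not> C \<subseteq> A}"
proof -
  have "{C \<in> conj_classes G. C \<inter> A \<noteq> {}} \<subseteq> conj_class G ` A"
    using conj_classes_eq_conj_class by blast
  then have "finite {C \<in> conj_classes G. C \<inter> A \<noteq> {}}"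
    using A finite_surj by blast
  moreover have "C \<noteq> {}" if "C \<in> conj_classes G" for C
    using that conj_class_self unfolding conj_classes_def by auto
  then have "{C \<in> conj_classes G. C \<inter> A \<noteq> {}}
      = {C \<in> conj_classes G. C \<subseteq> A} \<union> {C \<in> conj_classes G. C \<inter> A \<noteq> {} \<and> \<not> C \<subseteq> A}"
    by auto
  ultimately show ?thesis by (simp add: card_Un_disjoint disjoint_iff)
qed

end

lemma boundary_conj_classes_ratio_tendsto_zero:
  assumes "fin_gen_group G" and "left_folner G F" and "right_folner G F"
  shows "(\<lambda>n. real (card {C \<in> conj_classes G. C \<inter> F n \<noteq> {} \<and> \<not> C \<subseteq> F n})
            / real (card (F n))) \<longlonglongrightarrow> 0"
proof -
  interpret group G using assms(1) unfolding fin_gen_group_def by auto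
  obtain S where S: "finite S" "S \<subseteq> carrier G" "generate G S = carrier G"
    using assms(1) unfolding fin_gen_group_def by auto
  have F: "finite (F n)" "F n \<subseteq> carrier G" for n
    using assms(2) unfolding left_folner_def by auto
  define T where "T = S \<union> (\<lambda>s. inv\<^bsub>G\<^esub> s) ` S"
  define ratio where "ratio t n = real (card (sym_diff (t <#\<^bsub>G\<^esub> F n) (F n))) / real (card (F n))
      + real (card (sym_diff (F n #>\<^bsub>G\<^esub> t) (F n))) / real (card (F n))" for t n
  have "(\<lambda>n. \<Sum>t\<in>T. ratio t n) \<longlonglongrightarrow> (\<Sum>t\<in>T. 0 + 0)"
    using assms(2,3) S(2) unfolding T_def ratio_def left_folner_def right_folner_def
    by (intro tendsto_sum tendsto_add) auto
  then have sum_ratio: "(\<lambda>n. \<Sum>t\<in>T. ratio t n) \<longlonglongrightarrow> 0" by simp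
  have "real (card {C \<in> conj_classes G. C \<inter> F n \<noteq> {} \<and> \<not> C \<subseteq> F n}) / real (card (F n))
      \<le> (\<Sum>t\<in>T. ratio t n)" for n
  proof -
    have "real (card {C \<in> conj_classes G. C \<inter> F n \<noteq> {} \<and> \<not> C \<subseteq> F n})
        \<le> (\<Sum>t\<in>T. real (card (sym_diff (t <#\<^bsub>G\<^esub> F n) (F n)))
            + real (card (sym_diff (F n #>\<^bsub>G\<^esub> t) (F n))))"
      using card_boundary_conj_classes_le[OF S F] unfolding T_def by (simp flip: of_nat_sum of_nat_add)
    then show ?thesis
      unfolding ratio_def sum_divide_distrib[symmetric] add_divide_distrib[symmetric]
      by (rule divide_right_mono) simp
  qed
  then show ?thesis
    by (intro tendsto_sandwich[OF _ _ tendsto_const sum_ratio]) (simp_all add: always_eventually)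
qed

theorem proposition8p1:
  fixes G :: "('a, 'b) monoid_scheme" and F :: "nat \<Rightarrow> 'a set"
  assumes "fin_gen_group G"
    and "left_folner G F" and "right_folner G F"
  shows "((\<lambda>n. real (card {C \<in> conj_classes G. C \<inter> F n \<noteq> {} \<and> \<not> C \<subseteq> F n})
            / real (card (F n))) \<longlonglongrightarrow> 0) \<and>
         cr G F = limsup (\<lambda>n. ereal (real (card {C \<in> conj_classes G. C \<subseteq> F n})
            / real (card (F n))))"
proof -
  interpret group G using assms(1) unfolding fin_gen_group_def by auto
  have finite_F: "finite (F n)" for n using assms(2) unfolding left_folner_def by auto
  let ?boundary = "\<lambda>n. real (card {C \<in> conj_classes G. C \<inter> F n \<noteq> {} \<and> \<not> C \<subseteq> F n})
      / real (card (F n))"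
  let ?inside = "\<lambda>n. real (card {C \<in> conj_classes G. C \<subseteq> F n}) / real (card (F n))"
  have boundary: "?boundary \<longlonglongrightarrow> 0"
    using boundary_conj_classes_ratio_tendsto_zero[OF assms] .
  have "cr G F = limsup (\<lambda>n. ereal (?boundary n) + ereal (?inside n))"
    unfolding cr_def card_conj_classes_meeting[OF finite_F]
    by (simp add: add_divide_distrib add.commute)
  also have "\<dots> = 0 + limsup (\<lambda>n. ereal (?inside n))"
    using boundary by (intro ereal_limsup_lim_add) (auto simp: zero_ereal_def intro: tendsto_ereal)
  finally show ?thesis using boundary by simp
qed

end
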